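(* Let $[\mu]\in\mathbb PV_n$ be a critical point of $F_n$ with $\mathrm M_\mu=c_\mu I+D_\mu$, $c_\mu\in\mathbb R$, $D_\mu\in\mathrm{Der}(\mu)$. Then (i) $c_\mu=\dfrac{\operatorname{tr}\mathrm M_\mu^2}{\operatorname{tr}\mathrm M_\mu}=-\dfrac12\dfrac{\operatorname{tr}\mathrm M_\mu^2}{\|\mu\|^2}<0$; (ii) if $\operatorname{tr}D_\mu\neq0$, then $c_\mu=-\dfrac{\operatorname{tr}D_\mu^2}{\operatorname{tr}D_\mu}$ and $\operatorname{tr}D_\mu>0$.
   Context: $V_n$ is the space of bilinear maps $\mu:\mathbb C^n\times\mathbb C^n\to\mathbb C^n$ with the Hermitian inner product $\langle\mu,\lambda\rangle=\sum_{i,j,k}\langle\mu(X_i,X_j),X_k\rangle\overline{\langle\lambda(X_i,X_j),X_k\rangle}$ ($\{X_i\}$ orthonormal for the standard inner product of $\mathbb C^n$). $L^\mu_XY=\mu(X,Y)$, $R^\mu_XY=\mu(Y,X)$, $\mathrm M_\mu=2\sum_i L^\mu_{X_i}(L^\mu_{X_i})^*-2\sum_i (L^\mu_{X_i})^*L^\mu_{X_i}-2\sum_i (R^\mu_{X_i})^*R^\mu_{X_i}$. $F_n([\mu])=\operatorname{tr}\mathrm M_\mu^2/\|\mu\|^4$ on $\mathbb PV_n$; $\mathrm{Der}(\mu)$ is the derivation algebra. $[\mu]$ is a critical point of $F_n$ iff $\mathrm M_\mu=c_\mu I+D_\mu$ with $c_\mu\in\mathbb R$, $D_\mu\in\mathrm{Der}(\mu)$.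 *)

theory Defs
  imports "HOL-Analysis.Analysis"
begin

text \<open>C^n is modelled as complex^'n for a finite index type 'n (n = CARD('n)).
  A bilinear map mu : C^n x C^n -> C^n is given by its structure constants
  w.r.t. the standard orthonormal basis X_i = axis i 1:
  sc i j k = <mu(X_i,X_j),X_k>.\<close>

type_synonym 'n bilin = "'n \<Rightarrow> 'n \<Rightarrow> 'n \<Rightarrow> complex"

definition bapply :: "'n::finite bilin \<Rightarrow> complex^'n \<Rightarrow> complex^'n \<Rightarrow> complex^'n" where
  "bapply mu x y = (\<chi> k. \<Sum>i\<in>UNIV. \<Sum>j\<in>UNIV. x$i * y$j * mu i j k)"

definition bnorm2 :: "'n::finite bilin \<Rightarrow> real" where
  "bnorm2 mu = (\<Sum>i\<in>UNIV. \<Sum>j\<in>UNIV. \<Sum>k\<in>UNIV. (cmod (mu i j k))\<^sup>2)"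

definition cadj :: "complex^'n^'n \<Rightarrow> complex^'n^'n" where
  "cadj A = (\<chi> i j. cnj (A$j$i))"

definition Lop :: "'n::finite bilin \<Rightarrow> complex^'n \<Rightarrow> complex^'n^'n" where
  "Lop mu x = (\<chi> k l. (bapply mu x (axis l 1))$k)"

definition Rop :: "'n::finite bilin \<Rightarrow> complex^'n \<Rightarrow> complex^'n^'n" where
  "Rop mu x = (\<chi> k l. (bapply mu (axis l 1) x)$k)"

definition Mmu :: "'n::finite bilin \<Rightarrow> complex^'n^'n" where
  "Mmu mu =
     2 *\<^sub>R (\<Sum>i\<in>UNIV. Lop mu (axis i 1) ** cadj (Lop mu (axis i 1)))
   - 2 *\<^sub>R (\<Sum>i\<in>UNIV. cadj (Lop mu (axis i 1)) ** Lop mu (axis i 1))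
   - 2 *\<^sub>R (\<Sum>i\<in>UNIV. cadj (Rop mu (axis i 1)) ** Rop mu (axis i 1))"

definition Der :: "'n::finite bilin \<Rightarrow> (complex^'n^'n) set" where
  "Der mu = {D. \<forall>x y. D *v bapply mu x y = bapply mu (D *v x) y + bapply mu x (D *v y)}"

end

theory Submission
  imports Defs
begin

text \<open>The key identity is \<open>tr (M\<^sub>\<mu> E) = 2\<langle>E\<mu>(\<cdot>,\<cdot>) - \<mu>(E\<cdot>,\<cdot>) - \<mu>(\<cdot>,E\<cdot>), \<mu>\<rangle>\<close>
  for every matrix \<open>E\<close>. Taking \<open>E = D\<^sub>\<mu>\<close> gives \<open>tr (M\<^sub>\<mu> D\<^sub>\<mu>) = 0\<close>, and taking \<open>E = I\<close> gives
  \<open>tr M\<^sub>\<mu> = -2\<parallel>\<mu>\<parallel>\<^sup>2\<close>. Multiplying \<open>M\<^sub>\<mu> = c\<^sub>\<mu> I + D\<^sub>\<mu>\<close> by \<open>M\<^sub>\<mu>\<close> resp. \<open>D\<^sub>\<mu>\<close> and taking traces then yields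
  \<open>tr M\<^sub>\<mu>\<^sup>2 = c\<^sub>\<mu> tr M\<^sub>\<mu>\<close> and \<open>tr D\<^sub>\<mu>\<^sup>2 = -c\<^sub>\<mu> tr D\<^sub>\<mu>\<close>; since \<open>M\<^sub>\<mu>\<close> and \<open>D\<^sub>\<mu>\<close> are Hermitian, their
  squares have positive trace, which fixes the signs.\<close>

lemma bapply_axis_left: "bapply mu (axis a 1) y $ k = (\<Sum>b\<in>UNIV. y$b * mu a b k)"
  by (simp add: bapply_def axis_def if_distrib[of "\<lambda>x. x * _"] sum.swap[of _ UNIV] cong: if_cong)

lemma bapply_axis_right: "bapply mu x (axis b 1) $ k = (\<Sum>a\<in>UNIV. x$a * mu a b k)"
  by (simp add: bapply_def axis_def if_distrib[of "\<lambda>x. x * _"] if_distrib[of "\<lambda>x. _ * x"] cong: if_cong)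

lemma bapply_axis_axis: "bapply mu (axis a 1) (axis b 1) $ k = mu a b k"
  unfolding bapply_axis_left by (simp add: axis_def if_distrib[of "\<lambda>x. x * _"] cong: if_cong)

lemma Lop_axis_nth: "Lop mu (axis i 1) $ k $ l = mu i l k"
  by (simp add: Lop_def bapply_axis_axis)

lemma Rop_axis_nth: "Rop mu (axis i 1) $ k $ l = mu l i k"
  by (simp add: Rop_def bapply_axis_axis)

lemma Mmu_nth: "Mmu mu $ k $ m =
   2 * (\<Sum>i\<in>UNIV. \<Sum>l\<in>UNIV. mu i l k * cnj (mu i l m))
 - 2 * (\<Sum>i\<in>UNIV. \<Sum>l\<in>UNIV. cnj (mu i k l) * mu i m l)
 - 2 * (\<Sum>i\<in>UNIV. \<Sum>l\<in>UNIV. cnj (mu k i l) * mu m i l)"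
  by (simp add: Mmu_def matrix_matrix_mult_def cadj_def Lop_axis_nth Rop_axis_nth scaleR_conv_of_real)

lemma cadj_Mmu: "cadj (Mmu mu) = Mmu mu"
  by (simp add: cadj_def Mmu_nth vec_eq_iff mult.commute)

lemma sum_UNIV_4:
  "(\<Sum>a\<in>UNIV. \<Sum>b\<in>UNIV. \<Sum>c\<in>UNIV. \<Sum>d\<in>UNIV. f a b c d)
   = (\<Sum>(a, b, c, d)\<in>UNIV. f a b c d :: 'z::comm_monoid_add)"
  by (simp add: sum.cartesian_product case_prod_beta UNIV_Times_UNIV[symmetric] del: UNIV_Times_UNIV)

lemma matrix_vector_mult_axis_nth: "(A *v axis i 1) $ k = A$k$i"
  by (simp add: matrix_vector_mult_def axis_def if_distrib[of "\<lambda>x. _ * x"] cong: if_cong)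

definition derivation_defect :: "complex^'n^'n \<Rightarrow> 'n::finite bilin \<Rightarrow> 'n bilin" where
  "derivation_defect E mu i j m =
     (\<Sum>k\<in>UNIV. E$m$k * mu i j k) - (\<Sum>p\<in>UNIV. E$p$i * mu p j m) - (\<Sum>p\<in>UNIV. E$p$j * mu i p m)"

lemma derivation_defect_Der:
  assumes "D \<in> Der mu" shows "derivation_defect D mu i j m = 0"
proof -
  have "(\<Sum>k\<in>UNIV. D$m$k * mu i j k) = (D *v bapply mu (axis i 1) (axis j 1)) $ m"
    by (simp add: matrix_vector_mult_def bapply_axis_axis)
  also have "\<dots> = bapply mu (D *v axis i 1) (axis j 1) $ m + bapply mu (axis i 1) (D *v axis j 1) $ m"
    using assms by (simp add: Der_def)
  also have "\<dots> = (\<Sum>p\<in>UNIV. D$p$i * mu p j m) + (\<Sum>p\<in>UNIV. D$p$j * mu i p m)"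
    by (simp add: bapply_axis_left bapply_axis_right matrix_vector_mult_axis_nth)
  finally show ?thesis by (simp add: derivation_defect_def)
qed

lemma derivation_defect_mat_1: "derivation_defect (mat 1) mu i j m = - mu i j m"
  by (simp add: derivation_defect_def mat_def if_distrib[of "\<lambda>x. x * _"] cong: if_cong)

lemma trace_Mmu_mult:
  fixes E :: "complex^'n^'n" and mu :: "'n::finite bilin"
  shows "trace (Mmu mu ** E) =
    2 * (\<Sum>i\<in>UNIV. \<Sum>j\<in>UNIV. \<Sum>m\<in>UNIV. cnj (mu i j m) * derivation_defect E mu i j m)"
proof -
  have L: "(\<Sum>k\<in>UNIV. \<Sum>m\<in>UNIV. (\<Sum>i\<in>UNIV. \<Sum>l\<in>UNIV. mu i l k * cnj (mu i l m)) * E$m$k)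
    = (\<Sum>i\<in>UNIV. \<Sum>j\<in>UNIV. \<Sum>m\<in>UNIV. cnj (mu i j m) * (\<Sum>k\<in>UNIV. E$m$k * mu i j k))"
    unfolding sum_distrib_left sum_distrib_right sum_UNIV_4
    by (rule sum.reindex_bij_witness[where i="\<lambda>(i,j,m,k). (k,m,i,j)" and j="\<lambda>(k,m,i,j). (i,j,m,k)"]) auto
  have R1: "(\<Sum>k\<in>UNIV. \<Sum>m\<in>UNIV. (\<Sum>i\<in>UNIV. \<Sum>l\<in>UNIV. cnj (mu i k l) * mu i m l) * E$m$k)
    = (\<Sum>i\<in>UNIV. \<Sum>j\<in>UNIV. \<Sum>m\<in>UNIV. cnj (mu i j m) * (\<Sum>p\<in>UNIV. E$p$j * mu i p m))"
    unfolding sum_distrib_left sum_distrib_right sum_UNIV_4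
    by (rule sum.reindex_bij_witness[where i="\<lambda>(i,j,m,p). (j,p,i,m)" and j="\<lambda>(k,m,i,l). (i,k,l,m)"]) auto
  have R2: "(\<Sum>k\<in>UNIV. \<Sum>m\<in>UNIV. (\<Sum>i\<in>UNIV. \<Sum>l\<in>UNIV. cnj (mu k i l) * mu m i l) * E$m$k)
    = (\<Sum>i\<in>UNIV. \<Sum>j\<in>UNIV. \<Sum>m\<in>UNIV. cnj (mu i j m) * (\<Sum>p\<in>UNIV. E$p$i * mu p j m))"
    unfolding sum_distrib_left sum_distrib_right sum_UNIV_4
    by (rule sum.reindex_bij_witness[where i="\<lambda>(i,j,m,p). (i,p,j,m)" and j="\<lambda>(k,m,i,l). (k,i,l,m)"]) auto
  have "trace (Mmu mu ** E) = (\<Sum>k\<in>UNIV. \<Sum>m\<in>UNIV. Mmu mu $ k $ m * E$m$k)"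
    by (simp add: trace_def matrix_matrix_mult_def)
  also have "\<dots> = 2 * (\<Sum>k\<in>UNIV. \<Sum>m\<in>UNIV. (\<Sum>i\<in>UNIV. \<Sum>l\<in>UNIV. mu i l k * cnj (mu i l m)) * E$m$k)
     - 2 * (\<Sum>k\<in>UNIV. \<Sum>m\<in>UNIV. (\<Sum>i\<in>UNIV. \<Sum>l\<in>UNIV. cnj (mu i k l) * mu i m l) * E$m$k)
     - 2 * (\<Sum>k\<in>UNIV. \<Sum>m\<in>UNIV. (\<Sum>i\<in>UNIV. \<Sum>l\<in>UNIV. cnj (mu k i l) * mu m i l) * E$m$k)"
    unfolding Mmu_nth
    by (simp only: left_diff_distrib sum_subtractf sum_distrib_left[symmetric] mult.assoc)
  also have "\<dots> = 2 * (\<Sum>i\<in>UNIV. \<Sum>j\<in>UNIV. \<Sum>m\<in>UNIV. cnj (mu i j m) * derivation_defect E mu i j m)"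
    unfolding L R1 R2 derivation_defect_def
    by (simp add: right_diff_distrib sum_subtractf)
  finally show ?thesis .
qed

lemma trace_Mmu_mult_Der: "D \<in> Der mu \<Longrightarrow> trace (Mmu mu ** D) = 0"
  by (simp add: trace_Mmu_mult derivation_defect_Der)

lemma trace_Mmu: "trace (Mmu mu) = - 2 * complex_of_real (bnorm2 mu)"
proof -
  have "trace (Mmu mu) = trace (Mmu mu ** mat 1)" by simp
  also have "\<dots> = - 2 * (\<Sum>i\<in>UNIV. \<Sum>j\<in>UNIV. \<Sum>m\<in>UNIV. cnj (mu i j m) * mu i j m)"
    unfolding trace_Mmu_mult derivation_defect_mat_1 by (simp add: sum_negf)
  also have "\<dots> = - 2 * complex_of_real (bnorm2 mu)"
    by (simp add: bnorm2_def complex_norm_square mult.commute del: of_real_power)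
  finally show ?thesis .
qed

lemma bnorm2_pos:
  assumes "mu \<noteq> (\<lambda>i j k. 0)" shows "0 < bnorm2 mu"
  using assms unfolding bnorm2_def
  by (force simp: less_le sum_nonneg sum_nonneg_eq_0_iff fun_eq_iff)

lemma cadj_add: "cadj (A + B) = cadj A + cadj B"
  by (simp add: cadj_def vec_eq_iff)

lemma cadj_mat_of_real: "cadj (mat (complex_of_real c)) = mat (complex_of_real c)"
  by (simp add: cadj_def mat_def vec_eq_iff)

lemma trace_cadj_mult_self:
  "trace (cadj A ** A) = complex_of_real (\<Sum>i\<in>UNIV. \<Sum>j\<in>UNIV. (cmod (A$i$j))\<^sup>2)"
proof -
  have "trace (cadj A ** A) = (\<Sum>j\<in>UNIV. \<Sum>i\<in>UNIV. cnj (A$i$j) * A$i$j)"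
    by (simp add: trace_def matrix_matrix_mult_def cadj_def)
  also have "\<dots> = (\<Sum>i\<in>UNIV. \<Sum>j\<in>UNIV. cnj (A$i$j) * A$i$j)"
    by (rule sum.swap)
  finally show ?thesis
    by (simp add: complex_norm_square mult.commute del: of_real_power)
qed

lemma sum_cmod_nth_square_pos:
  fixes A :: "complex^'n::finite^'m::finite"
  assumes "A \<noteq> 0" shows "0 < (\<Sum>i\<in>UNIV. \<Sum>j\<in>UNIV. (cmod (A$i$j))\<^sup>2)"
  using assms by (force simp: less_le sum_nonneg sum_nonneg_eq_0_iff vec_eq_iff)

lemma trace_square_hermitian:
  assumes "cadj A = A" "A \<noteq> 0" obtains r where "0 < r" "trace (A ** A) = complex_of_real r"
  using sum_cmod_nth_square_pos[OF assms(2)] trace_cadj_mult_self[of A] assms(1) by auto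

lemma trace_hermitian_real: "cadj A = A \<Longrightarrow> trace A \<in> \<real>"
  unfolding trace_def cadj_def by (intro sum_in_Reals) (metis Reals_cnj_iff vec_lambda_beta)

lemma trace_mult_mat: "trace ((A::'a::comm_semiring_1^'n^'n) ** mat x) = x * trace A"
  by (simp add: trace_def matrix_matrix_mult_def mat_def sum_distrib_left mult.commute
      if_distrib[of "\<lambda>y. _ * y"] cong: if_cong)

lemma trace_squares_orthogonal_decomposition:
  fixes M D :: "'a::comm_ring_1^'n^'n"
  assumes M: "M = mat c + D" and orth: "trace (M ** D) = 0"
  shows "trace (M ** M) = c * trace M" and "trace (D ** D) = - c * trace D"
proof -
  have "trace (M ** M) = trace (M ** mat c) + trace (M ** D)"
    by (simp only: trace_add[symmetric] matrix_add_ldistrib[symmetric] M[symmetric])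
  then show "trace (M ** M) = c * trace M"
    using orth by (simp add: trace_mult_mat)
  have "trace (D ** mat c) + trace (D ** D) = trace (M ** D)"
    by (simp only: trace_add[symmetric] matrix_add_ldistrib[symmetric] M[symmetric] trace_mul_sym[of D M])
  then show "trace (D ** D) = - c * trace D"
    using orth by (simp add: trace_mult_mat eq_neg_iff_add_eq_0 add.commute)
qed

lemma hermitian_decomposition_trace_pos:
  assumes herm: "cadj M = M" and M: "M = mat (complex_of_real c) + D"
    and orth: "trace (M ** D) = 0" and "c < 0" and trD: "trace D \<noteq> 0"
  shows "complex_of_real c = - trace (D ** D) / trace D \<and> trace D \<in> \<real> \<and> 0 < Re (trace D)"
proof -
  have DD: "trace (D ** D) = - complex_of_real c * trace D"
    by (rule trace_squares_orthogonal_decomposition(2)[OF M orth])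
  have "cadj D = D" using herm by (subst (asm) M) (simp add: M cadj_add cadj_mat_of_real)
  moreover have "D \<noteq> 0" using trD by (auto simp: trace_def)
  ultimately obtain q where "0 < q" and q: "trace (D ** D) = complex_of_real q"
    by (rule trace_square_hermitian)
  have real: "trace D \<in> \<real>" using \<open>cadj D = D\<close> by (rule trace_hermitian_real)
  then obtain t where t: "trace D = complex_of_real t" by (auto elim: Reals_cases)
  have "complex_of_real q = complex_of_real (- c * t)" using DD q t by simp
  then have "q = - c * t" by (simp only: of_real_eq_iff)
  then have "0 < t" using \<open>0 < q\<close> \<open>c < 0\<close> by (simp add: mult_less_0_iff)
  with DD trD real t show ?thesis by simp
qed

theorem lemma3p6:
  fixes mu :: "'n::finite bilin" and c :: real and D :: "complex^'n^'n"
  assumes "mu \<noteq> (\<lambda>i j k. 0)"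
    and "D \<in> Der mu"
    and "Mmu mu = mat (complex_of_real c) + D"
  shows "complex_of_real c = trace (Mmu mu ** Mmu mu) / trace (Mmu mu)
       \<and> complex_of_real c = - (1/2) * trace (Mmu mu ** Mmu mu) / complex_of_real (bnorm2 mu)
       \<and> c < 0
       \<and> (trace D \<noteq> 0 \<longrightarrow>
         complex_of_real c = - trace (D ** D) / trace D \<and> trace D \<in> \<real> \<and> 0 < Re (trace D))"
proof -
  have orth: "trace (Mmu mu ** D) = 0" using assms(2) by (rule trace_Mmu_mult_Der)
  have MM: "trace (Mmu mu ** Mmu mu) = complex_of_real c * trace (Mmu mu)"
    by (rule trace_squares_orthogonal_decomposition(1)[OF assms(3) orth])
  have b: "0 < bnorm2 mu" using assms(1) by (rule bnorm2_pos)
  then have "Mmu mu \<noteq> 0" using trace_Mmu[of mu] by (auto simp: trace_def)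
  with cadj_Mmu obtain r where "0 < r" and r: "trace (Mmu mu ** Mmu mu) = complex_of_real r"
    by (rule trace_square_hermitian)
  have "complex_of_real r = complex_of_real (- 2 * c * bnorm2 mu)"
    using MM r trace_Mmu[of mu] by (simp add: mult_ac)
  then have "r = - 2 * c * bnorm2 mu" by (simp only: of_real_eq_iff)
  then have "c < 0" using \<open>0 < r\<close> b by (simp add: mult_less_0_iff)
  moreover have "complex_of_real c = trace (Mmu mu ** Mmu mu) / trace (Mmu mu)"
    using MM trace_Mmu[of mu] b by simp
  moreover have "complex_of_real c = - (1/2) * trace (Mmu mu ** Mmu mu) / complex_of_real (bnorm2 mu)"
    using MM trace_Mmu[of mu] b by simp
  ultimately show ?thesis
    using hermitian_decomposition_trace_pos[OF cadj_Mmu assms(3) orth] by blast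
qed

end
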